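(* Let $K\subseteq\mathbb{R}^n$ be a proper cone and let $A\in\mathbb{R}^{n\times n}$ be $K$-monotone. Let $A=U-V$ be a $K$-regular splitting. Let $U=F-G=\overline{F}-\overline{G}$ be two $K$-weak regular splittings of type II of $U$ such that $VF^{-1}G=GF^{-1}V$ and $V\overline{F}^{-1}\overline{G}=\overline{G}\,\overline{F}^{-1}V$. For a positive integer $s$ define $$T_{s}=(F^{-1}G)^{s}+\sum_{j=0}^{s-1}(F^{-1}G)^{j}F^{-1}V,\qquad \overline{T}_{s}=(\overline{F}^{-1}\overline{G})^{s}+\sum_{j=0}^{s-1}(\overline{F}^{-1}\overline{G})^{j}\overline{F}^{-1}V,$$ $$\widehat{T}_{s}=(GF^{-1})^{s}+\sum_{j=0}^{s-1}(GF^{-1})^{j}VF^{-1},\qquad \widehat{\overline{T}}_{s}=(\overline{G}\,\overline{F}^{-1})^{s}+\sum_{j=0}^{s-1}(\overline{G}\,\overline{F}^{-1})^{j}V\overline{F}^{-1},$$ and let $P_s,\overline{P}_s$ be the matrices with $P_s^{-1}=\sum_{j=0}^{s-1}(F^{-1}G)^jF^{-1}$ and $\overline{P}_s^{-1}=\sum_{j=0}^{s-1}(\overline{F}^{-1}\overline{G})^j\overline{F}^{-1}$. Then $\rho(T_s)\leq\rho(\overline{T}_s)<1$, provided any one of the following conditions holds: (i) $\overline{G}\,\overline{F}^{-1}\geq_K GF^{-1}$ and $\widehat{T}_sP_s\geq_K 0$; (ii) $\widehat{\overline{T}}_s\overline{P}_s\geq_K \widehat{T}_sP_s$.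
   Context: A proper cone $K\subseteq\mathbb{R}^n$ is a closed, convex, pointed, solid cone. For $M\in\mathbb{R}^{n\times n}$, $M\geq_K 0$ means $MK\subseteq K$, and $M\geq_K N$ means $M-N\geq_K0$. A matrix $A$ is $K$-monotone if $A$ is nonsingular and $A^{-1}\geq_K 0$. A splitting $A=U-V$ (with $U$ nonsingular) is $K$-regular if $U^{-1}\geq_K 0$ and $V\geq_K 0$; it is a $K$-weak regular splitting of type II if $U^{-1}\geq_K 0$ and $VU^{-1}\geq_K 0$. $\rho$ denotes spectral radius. *)

theory Defs
  imports "HOL-Analysis.Analysis"
begin

definition proper_cone :: "(real^'n) set \<Rightarrow> bool" where
  "proper_cone K \<longleftrightarrow> cone K \<and> convex K \<and> closed K \<and>
     K \<inter> uminus ` K = {0} \<and> interior K \<noteq> {}"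

definition K_nonneg :: "(real^'n) set \<Rightarrow> real^'n^'n \<Rightarrow> bool" where
  "K_nonneg K M \<longleftrightarrow> (\<forall>x\<in>K. M *v x \<in> K)"

definition K_geq :: "(real^'n) set \<Rightarrow> real^'n^'n \<Rightarrow> real^'n^'n \<Rightarrow> bool" where
  "K_geq K M N \<longleftrightarrow> K_nonneg K (M - N)"

definition K_monotone :: "(real^'n) set \<Rightarrow> real^'n^'n \<Rightarrow> bool" where
  "K_monotone K A \<longleftrightarrow> invertible A \<and> K_nonneg K (matrix_inv A)"

definition K_regular_splitting ::
  "(real^'n) set \<Rightarrow> real^'n^'n \<Rightarrow> real^'n^'n \<Rightarrow> real^'n^'n \<Rightarrow> bool" where
  "K_regular_splitting K A U V \<longleftrightarrow> A = U - V \<and> invertible U \<and>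
     K_nonneg K (matrix_inv U) \<and> K_nonneg K V"

definition K_weak_regular_splitting_II ::
  "(real^'n) set \<Rightarrow> real^'n^'n \<Rightarrow> real^'n^'n \<Rightarrow> real^'n^'n \<Rightarrow> bool" where
  "K_weak_regular_splitting_II K A U V \<longleftrightarrow> A = U - V \<and> invertible U \<and>
     K_nonneg K (matrix_inv U) \<and> K_nonneg K (V ** matrix_inv U)"

text \<open>Matrix power (the ring multiplication on vec types is componentwise,
  so we use matrix product explicitly).\<close>
primrec matpow :: "real^'n^'n \<Rightarrow> nat \<Rightarrow> real^'n^'n" where
  "matpow A 0 = mat 1"
| "matpow A (Suc k) = A ** matpow A k"

definition spectral_radius :: "real^'n^'n \<Rightarrow> real" where
  "spectral_radius A = Max {cmod l | l. \<exists>v::complex^'n. v \<noteq> 0 \<and>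
      (\<chi> i j. complex_of_real (A $ i $ j)) *v v = l *s v}"

end

theory Submission
  imports Defs
begin

text \<open>
  Let \<open>N = P\<^sup>-\<^sup>1\<close> and \<open>Nb = Pb\<^sup>-\<^sup>1\<close>. Telescoping gives \<open>T = I - N A\<close> and, by the
  commutation hypothesis, \<open>Th = I - A N\<close>; the two are similar via \<open>A\<close>, and \<open>Th\<close> is visibly
  \<open>K\<close>-nonnegative. A finite-dimensional Krein-Rutman theorem, obtained from Brouwer's fixed point
  theorem, provides Perron eigenvectors in \<open>K\<close> and Collatz-Wielandt bounds by sub- and
  superinvariant vectors. A Perron eigenvector of \<open>I - A N\<close> together with \<open>A\<^sup>-\<^sup>1 \<ge>\<^sub>K 0\<close>
  forces \<open>\<rho>(I - A N) < 1\<close>. Under (i), \<open>U (N - Nb) = (Gb Fb\<^sup>-\<^sup>1)\<^sup>s - (G F\<^sup>-\<^sup>1)\<^sup>s\<close> gives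
  \<open>N \<ge>\<^sub>K Nb\<close>; under (ii), \<open>Th P = P - A\<close> turns the hypothesis into \<open>Pb \<ge>\<^sub>K P\<close>. Either
  ordering transports a sub- or superinvariant vector from one iteration matrix to the other.
\<close>

section \<open>Proper cones\<close>

lemma proper_cone_convex_cone: "proper_cone K \<Longrightarrow> convex_cone K"
  unfolding proper_cone_def convex_cone_def conic_def cone_def
  using interior_subset by blast

lemma proper_cone_add: "proper_cone K \<Longrightarrow> x \<in> K \<Longrightarrow> y \<in> K \<Longrightarrow> x + y \<in> K"
  using convex_cone_add proper_cone_convex_cone by blast

lemma proper_cone_scaleR: "proper_cone K \<Longrightarrow> x \<in> K \<Longrightarrow> 0 \<le> c \<Longrightarrow> c *\<^sub>R x \<in> K"
  using convex_cone_scaleR proper_cone_convex_cone by blast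

lemma proper_cone_zero: "proper_cone K \<Longrightarrow> 0 \<in> K"
  using convex_cone_contains_0 proper_cone_convex_cone by blast

lemma proper_cone_closed: "proper_cone K \<Longrightarrow> closed K"
  unfolding proper_cone_def by blast

lemma proper_cone_pointed: "proper_cone K \<Longrightarrow> x \<in> K \<Longrightarrow> - x \<in> K \<Longrightarrow> x = 0"
  unfolding proper_cone_def by (metis IntI image_eqI minus_minus singletonD)

lemma proper_cone_add_interior:
  assumes "proper_cone K" "x \<in> K" "y \<in> interior K"
  shows "x + y \<in> interior K"
proof -
  obtain T where T: "open T" "y \<in> T" "T \<subseteq> K" using assms(3) by (rule interiorE)
  have "(\<lambda>z. x + z) ` T \<subseteq> K" using T(3) assms(1,2) proper_cone_add by blast
  then show ?thesis using T by (intro interiorI[OF open_translation]) auto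
qed

lemma proper_cone_scaleR_interior:
  assumes "proper_cone K" "0 < c" "y \<in> interior K"
  shows "c *\<^sub>R y \<in> interior K"
proof -
  obtain T where T: "open T" "y \<in> T" "T \<subseteq> K" using assms(3) by (rule interiorE)
  have "(*\<^sub>R) c ` T \<subseteq> K" using T(3) assms(1,2) proper_cone_scaleR by fastforce
  then show ?thesis using T assms(2) by (intro interiorI[OF open_scaling]) auto
qed

lemma proper_cone_interior_nonzero:
  assumes "proper_cone K" "(y::real^'n) \<in> interior K"
  shows "y \<noteq> 0"
proof
  assume "y = 0"
  then obtain d where d: "d > 0" "ball 0 d \<subseteq> K" using assms(2) mem_interior by blast
  define v :: "real^'n" where "v = (d/2) *\<^sub>R axis undefined 1"
  have "v \<in> K" "- v \<in> K" using d by (auto intro!: subsetD[OF d(2)] simp: v_def)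
  then have "v = 0" using proper_cone_pointed[OF assms(1)] by blast
  then have "v $ undefined = 0" by simp
  then show False using d by (simp add: v_def axis_def)
qed

lemma proper_cone_interior_dominates:
  assumes "proper_cone K" "y \<in> interior K"
  obtains c where "c > 0" "c *\<^sub>R y - w \<in> K" "c *\<^sub>R y + w \<in> K"
proof -
  obtain d where d: "d > 0" "ball y d \<subseteq> K" using assms(2) mem_interior by blast
  have nw: "0 < norm w + 1" by (simp add: add_nonneg_pos)
  define s where "s = d / (norm w + 1)"
  have s: "s > 0" unfolding s_def using d nw by simp
  have "norm (s *\<^sub>R w) = s * norm w" using s by simp
  also have "\<dots> < s * (norm w + 1)" using s by simp
  also have "\<dots> = d" using nw by (simp add: s_def)
  finally have "y - s *\<^sub>R w \<in> K" "y + s *\<^sub>R w \<in> K"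
    by (auto intro!: subsetD[OF d(2)] simp: dist_norm)
  then have "(1/s) *\<^sub>R (y - s *\<^sub>R w) \<in> K" "(1/s) *\<^sub>R (y + s *\<^sub>R w) \<in> K"
    using proper_cone_scaleR[OF assms(1)] s by auto
  then show ?thesis using s by (intro that[of "1/s"]) (auto simp: algebra_simps)
qed

text \<open>Otherwise unit vectors \<open>z\<^sub>k\<close> and \<open>a\<^sub>k \<rightarrow> 0\<close> with \<open>a\<^sub>k \<plusminus> z\<^sub>k \<in> K\<close> have a limit point
  \<open>l\<close> of norm one with \<open>\<plusminus>l \<in> K\<close>.\<close>
lemma proper_cone_unit_bounded_below:
  fixes K :: "(real^'n) set"
  assumes K: "proper_cone K"
  obtains \<delta> where "\<delta> > 0" "\<And>a z. a - z \<in> K \<Longrightarrow> a + z \<in> K \<Longrightarrow> norm z = 1 \<Longrightarrow> \<delta> \<le> norm a"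
proof -
  have "\<exists>\<delta>>0. \<forall>a z. a - z \<in> K \<longrightarrow> a + z \<in> K \<longrightarrow> norm z = 1 \<longrightarrow> \<delta> \<le> norm a"
  proof (rule ccontr)
    assume "\<not> ?thesis"
    then have "\<forall>k. \<exists>a z. a - z \<in> K \<and> a + z \<in> K \<and> z \<in> sphere 0 1 \<and> norm a < 1 / real (Suc k)"
      by (auto simp: not_le)
    then obtain a z where az: "\<And>k. a k - z k \<in> K" "\<And>k. a k + z k \<in> K"
      and z: "\<And>k. z k \<in> sphere 0 1" and a: "\<And>k. norm (a k) < 1 / real (Suc k)"
      by metis
    have "a \<longlonglongrightarrow> 0"
    proof (rule tendsto_norm_zero_cancel,
        rule real_tendsto_sandwich[of "\<lambda>_. 0" _ _ "\<lambda>k. 1 / real (Suc k)"])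
      show "\<forall>\<^sub>F k in sequentially. norm (a k) \<le> 1 / real (Suc k)"
        using a by (intro always_eventually allI less_imp_le)
      show "(\<lambda>k. 1 / real (Suc k)) \<longlonglongrightarrow> 0"
        using LIMSEQ_inverse_real_of_nat by (simp add: inverse_eq_divide)
    qed simp_all
    obtain l r where l: "l \<in> sphere 0 1" and r: "strict_mono r" and lim: "(z \<circ> r) \<longlonglongrightarrow> l"
      using compact_imp_seq_compact[OF compact_sphere, of 0 1] z unfolding seq_compact_def by metis
    have ar: "(a \<circ> r) \<longlonglongrightarrow> 0" using LIMSEQ_subseq_LIMSEQ[OF \<open>a \<longlonglongrightarrow> 0\<close> r] .
    have "(\<lambda>k. (a \<circ> r) k + (z \<circ> r) k) \<longlonglongrightarrow> 0 + l" by (intro tendsto_intros ar lim)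
    then have "l \<in> K"
      using closed_sequentially[OF proper_cone_closed[OF K], of "\<lambda>k. (a \<circ> r) k + (z \<circ> r) k"] az
      by auto
    moreover have "(\<lambda>k. (a \<circ> r) k - (z \<circ> r) k) \<longlonglongrightarrow> 0 - l" by (intro tendsto_intros ar lim)
    then have "- l \<in> K"
      using closed_sequentially[OF proper_cone_closed[OF K], of "\<lambda>k. (a \<circ> r) k - (z \<circ> r) k"] az
      by auto
    ultimately have "l = 0" using proper_cone_pointed[OF K] by blast
    then show False using l by simp
  qed
  then show ?thesis using that by auto
qed

lemma proper_cone_normal:
  fixes K :: "(real^'n) set"
  assumes K: "proper_cone K"
  obtains N where "\<And>a z. a - z \<in> K \<Longrightarrow> a + z \<in> K \<Longrightarrow> norm z \<le> N * norm a"
proof -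
  obtain \<delta> where \<delta>: "\<delta> > 0" "\<And>a z. a - z \<in> K \<Longrightarrow> a + z \<in> K \<Longrightarrow> norm z = 1 \<Longrightarrow> \<delta> \<le> norm a"
    using proper_cone_unit_bounded_below[OF K] by blast
  have "norm z \<le> (1 / \<delta>) * norm a" if az: "a - z \<in> K" "a + z \<in> K" for a z
  proof (cases "z = 0")
    case False
    let ?c = "1 / norm z"
    have "?c *\<^sub>R a - ?c *\<^sub>R z \<in> K" "?c *\<^sub>R a + ?c *\<^sub>R z \<in> K"
      using proper_cone_scaleR[OF K az(1), of ?c] proper_cone_scaleR[OF K az(2), of ?c]
      by (simp_all add: scaleR_diff_right scaleR_add_right)
    then have "\<delta> \<le> norm a / norm z" using \<delta>(2) False by fastforce
    then show ?thesis using \<delta>(1) False by (simp add: field_simps)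
  qed (use \<delta>(1) in simp)
  then show ?thesis using that by blast
qed

section \<open>Matrix algebra and the cone order\<close>

lemma matrix_inv_right: "invertible (M::real^'n^'n) \<Longrightarrow> M ** matrix_inv M = mat 1"
  unfolding invertible_def matrix_inv_def by (rule conjunct1[OF someI_ex])

lemma matrix_inv_left: "invertible (M::real^'n^'n) \<Longrightarrow> matrix_inv M ** M = mat 1"
  using matrix_inv_right matrix_left_right_inverse by blast

lemma matrix_diff_ldistrib: "(A::'a::comm_ring_1^'n^'m) ** (B - C) = A ** B - A ** C"
  by (simp add: matrix_matrix_mult_def vec_eq_iff sum_subtractf algebra_simps)

lemma matrix_diff_rdistrib: "((A::'a::comm_ring_1^'n^'m) - B) ** C = A ** C - B ** C"
  by (simp add: matrix_matrix_mult_def vec_eq_iff sum_subtractf algebra_simps)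

lemma matrix_add_rdistrib: "((A::'a::comm_ring_1^'n^'m) + B) ** C = A ** C + B ** C"
  by (simp add: matrix_matrix_mult_def vec_eq_iff sum.distrib algebra_simps)

lemma matrix_sum_ldistrib: "(A::'a::comm_ring_1^'n^'m) ** (\<Sum>l\<in>L. f l) = (\<Sum>l\<in>L. A ** f l)"
  by (induction L rule: infinite_finite_induct) (auto simp: matrix_add_ldistrib)

lemma matrix_sum_rdistrib: "(\<Sum>l\<in>L. f l) ** (A::'a::comm_ring_1^'n^'m) = (\<Sum>l\<in>L. f l ** A)"
  by (induction L rule: infinite_finite_induct) (auto simp: matrix_add_rdistrib)

lemma matpow_commute: "matpow A k ** A = A ** matpow A k"
  by (induction k) (simp_all add: matrix_mul_assoc[symmetric])

lemma matpow_intertwine: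
  assumes XY: "X ** Y = Y ** Z"
  shows "matpow X k ** Y = Y ** matpow Z k"
proof (induction k)
  case (Suc k)
  have "matpow X (Suc k) ** Y = X ** (matpow X k ** Y)" by (simp add: matrix_mul_assoc)
  also have "\<dots> = (X ** Y) ** matpow Z k" by (simp add: Suc matrix_mul_assoc)
  also have "\<dots> = Y ** matpow Z (Suc k)" by (simp add: XY matrix_mul_assoc)
  finally show ?case .
qed simp

lemma sum_matpow_telescope_right:
  "(\<Sum>j<s. matpow X j) ** (mat 1 - X) = mat 1 - matpow X s"
proof -
  have "(\<Sum>j<s. matpow X j) ** (mat 1 - X) = (\<Sum>j<s. matpow X j - matpow X (Suc j))"
    by (simp add: matrix_sum_rdistrib matrix_diff_ldistrib matpow_commute sum_subtractf)
  also have "\<dots> = mat 1 - matpow X s" using sum_lessThan_telescope'[of "matpow X" s] by simp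
  finally show ?thesis .
qed

lemma sum_matpow_telescope_left:
  "(mat 1 - X) ** (\<Sum>j<s. matpow X j) = mat 1 - matpow X s"
proof -
  have "(mat 1 - X) ** (\<Sum>j<s. matpow X j) = (\<Sum>j<s. matpow X j - matpow X (Suc j))"
    by (simp add: matrix_sum_ldistrib matrix_diff_rdistrib sum_subtractf)
  also have "\<dots> = mat 1 - matpow X s" using sum_lessThan_telescope'[of "matpow X" s] by simp
  finally show ?thesis .
qed

lemma K_nonneg_mult: "K_nonneg K A \<Longrightarrow> K_nonneg K B \<Longrightarrow> K_nonneg K (A ** B)"
  unfolding K_nonneg_def by (simp flip: matrix_vector_mul_assoc)

lemma K_nonneg_add: "proper_cone K \<Longrightarrow> K_nonneg K A \<Longrightarrow> K_nonneg K B \<Longrightarrow> K_nonneg K (A + B)"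
  unfolding K_nonneg_def by (simp add: matrix_vector_mult_add_rdistrib proper_cone_add)

lemma K_nonneg_sum:
  assumes "proper_cone K" "\<And>i. i \<in> S \<Longrightarrow> K_nonneg K (f i)"
  shows "K_nonneg K (sum f S)"
  using assms(2)
proof (induction S rule: infinite_finite_induct)
  case (insert x F)
  then show ?case by (simp add: K_nonneg_add assms(1))
qed (simp_all add: K_nonneg_def proper_cone_zero assms(1))

lemma K_nonneg_matpow: "K_nonneg K A \<Longrightarrow> K_nonneg K (matpow A k)"
  by (induction k) (simp_all add: K_nonneg_mult, simp add: K_nonneg_def)

lemma K_geq_matpow:
  assumes K: "proper_cone K" and "K_nonneg K B" "K_geq K A B"
  shows "K_geq K (matpow A k) (matpow B k)"
proof (induction k)
  case 0
  then show ?case using proper_cone_zero[OF K] by (simp add: K_geq_def K_nonneg_def)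
next
  case (Suc k)
  have A: "K_nonneg K A"
    using K_nonneg_add[OF K, of "A - B" B] assms(2,3) by (simp add: K_geq_def)
  have "matpow A (Suc k) - matpow B (Suc k) = A ** (matpow A k - matpow B k) + (A - B) ** matpow B k"
    by (simp add: matrix_diff_ldistrib matrix_diff_rdistrib)
  moreover have "K_nonneg K (A ** (matpow A k - matpow B k) + (A - B) ** matpow B k)"
    using Suc A assms(2,3) by (intro K_nonneg_add[OF K] K_nonneg_mult K_nonneg_matpow) (auto simp: K_geq_def)
  ultimately show ?case by (simp add: K_geq_def)
qed

section \<open>Eigenvalues and the spectral radius\<close>

definition cmat :: "real^'n^'n \<Rightarrow> complex^'n^'n" where
  "cmat A = (\<chi> i j. complex_of_real (A $ i $ j))"

definition cvec :: "real^'n \<Rightarrow> complex^'n" where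
  "cvec x = (\<chi> i. complex_of_real (x $ i))"

definition eigenvalues :: "real^'n^'n \<Rightarrow> complex set" where
  "eigenvalues A = {l. \<exists>v. v \<noteq> 0 \<and> cmat A *v v = l *s v}"

lemma spectral_radius_eq_Max: "spectral_radius A = Max (cmod ` eigenvalues A)"
  unfolding spectral_radius_def eigenvalues_def cmat_def by (simp add: image_Collect)

lemma cmat_mult: "cmat (A ** B) = cmat A ** cmat B"
  by (simp add: cmat_def matrix_matrix_mult_def vec_eq_iff)

lemma cmat_mat_1: "cmat (mat 1) = mat 1"
  by (simp add: cmat_def mat_def vec_eq_iff)

lemma cmat_mult_cvec: "cmat A *v cvec x = cvec (A *v x)"
  by (simp add: cmat_def cvec_def matrix_vector_mult_def vec_eq_iff)

lemma matrix_vector_mult_smult: "(M::'a::comm_ring_1^'n^'m) *v (c *s v) = c *s (M *v v)"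
  by (simp add: matrix_vector_mult_def vec_eq_iff sum_distrib_left mult.left_commute)

lemma matrix_vector_mult_sum: "(M::'a::comm_ring_1^'n^'m) *v (\<Sum>l\<in>L. f l) = (\<Sum>l\<in>L. M *v f l)"
  by (induction L rule: infinite_finite_induct) (auto simp: matrix_vector_right_distrib)

lemma smult_sum: "(c::'a::comm_ring_1) *s (\<Sum>l\<in>L. f l) = (\<Sum>l\<in>L. c *s f l)"
  by (induction L rule: infinite_finite_induct) (auto simp: vector_add_ldistrib)

lemma of_real_eigenvalue:
  "x \<noteq> 0 \<Longrightarrow> A *v x = m *\<^sub>R x \<Longrightarrow> complex_of_real m \<in> eigenvalues A"
proof -
  assume x: "x \<noteq> 0" and Ax: "A *v x = m *\<^sub>R x"
  have "cmat A *v cvec x = complex_of_real m *s cvec x"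
    by (simp add: cmat_mult_cvec Ax) (simp add: cvec_def vec_eq_iff)
  moreover have "cvec x \<noteq> 0" using x by (auto simp: cvec_def vec_eq_iff)
  ultimately show ?thesis unfolding eigenvalues_def by blast
qed

lemma eigenvectors_independent:
  fixes M :: "complex^'n^'n"
  assumes "finite L" "\<And>l. l \<in> L \<Longrightarrow> v l \<noteq> 0 \<and> M *v v l = l *s v l"
    and "(\<Sum>l\<in>L. c l *s v l) = 0" "l \<in> L"
  shows "c l = 0"
  using assms
proof (induction L arbitrary: c l rule: finite_induct)
  case (insert a L)
  have va: "M *v v a = a *s v a" "v a \<noteq> 0" using insert.prems(1) by auto
  have sum0: "c a *s v a + (\<Sum>l\<in>L. c l *s v l) = 0" using insert.prems(2) insert.hyps by simp
  have Mv: "(\<Sum>l\<in>L. c l *s (M *v v l)) = (\<Sum>l\<in>L. (c l * l) *s v l)"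
    by (rule sum.cong) (auto simp: insert.prems(1) vector_smult_assoc)
  have "M *v (c a *s v a + (\<Sum>l\<in>L. c l *s v l)) = (c a * a) *s v a + (\<Sum>l\<in>L. (c l * l) *s v l)"
    by (simp only: matrix_vector_right_distrib matrix_vector_mult_sum matrix_vector_mult_smult
        Mv va vector_smult_assoc)
  moreover have "a *s (c a *s v a + (\<Sum>l\<in>L. c l *s v l)) = (c a * a) *s v a + (\<Sum>l\<in>L. (a * c l) *s v l)"
    by (simp only: vector_add_ldistrib smult_sum vector_smult_assoc mult.commute)
  ultimately have "(c a * a) *s v a + (\<Sum>l\<in>L. (c l * l) *s v l) = (c a * a) *s v a + (\<Sum>l\<in>L. (a * c l) *s v l)"
    unfolding sum0 by simp
  then have "(\<Sum>l\<in>L. (c l * l) *s v l - (a * c l) *s v l) = 0"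
    by (simp add: sum_subtractf)
  moreover have "(c l * (l - a)) *s v l = (c l * l) *s v l - (a * c l) *s v l" for l
    by (simp add: vector_sub_rdistrib algebra_simps)
  ultimately have "(\<Sum>l\<in>L. (c l * (l - a)) *s v l) = 0" by simp
  then have cL: "c l * (l - a) = 0" if "l \<in> L" for l
    using insert.IH[of "\<lambda>l. c l * (l - a)" l] insert.prems(1) that by simp
  have "c l = 0" if "l \<in> L" for l using cL[OF that] insert.hyps(2) that by auto
  moreover from this have "c a *s v a = 0" using sum0 by simp
  then have "c a = 0" using va(2) by (auto simp: vec_eq_iff)
  ultimately show ?case using insert.prems(3) by auto
qed simp

lemma finite_eigenvalues: "finite (eigenvalues (A::real^'n^'n))"
proof (rule ccontr)
  assume "infinite (eigenvalues A)"
  then obtain L where L: "finite L" "card L = Suc CARD('n)" "L \<subseteq> eigenvalues A"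
    using infinite_arbitrarily_large by metis
  define v where "v l = (SOME v. v \<noteq> 0 \<and> cmat A *v v = l *s v)" for l
  have v: "v l \<noteq> 0 \<and> cmat A *v v l = l *s v l" if "l \<in> L" for l
  proof -
    have "\<exists>v. v \<noteq> 0 \<and> cmat A *v v = l *s v" using that L(3) unfolding eigenvalues_def by blast
    then show ?thesis unfolding v_def by (rule someI_ex)
  qed
  have inj: "inj_on v L"
  proof
    fix a b assume ab: "a \<in> L" "b \<in> L" "v a = v b"
    then have "a *s v a = b *s v a" using v by metis
    then have "(a - b) *s v a = 0" by (simp add: vector_sub_rdistrib)
    then show "a = b" using v[OF ab(1)] by (auto simp: vec_eq_iff)
  qed
  have "vec.independent (v ` L)"
    unfolding vec.independent_explicit
  proof (intro conjI allI impI ballI)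
    show "finite (v ` L)" using L(1) by simp
    fix c w assume "(\<Sum>w\<in>v ` L. c w *s w) = 0" and w: "w \<in> v ` L"
    then have "(\<Sum>l\<in>L. c (v l) *s v l) = 0" by (simp add: sum.reindex[OF inj])
    then show "c w = 0" using eigenvectors_independent[OF L(1) v] w by auto
  qed
  then have "card (v ` L) \<le> vec.dim (UNIV :: (complex^'n) set)"
    using vec.independent_card_le_dim by blast
  then have "card (v ` L) \<le> CARD('n)" by (simp add: vec.dim_UNIV card_cart_basis)
  then show False using L(2) card_image[OF inj] by simp
qed

lemma eigenvalue_le_spectral_radius: "l \<in> eigenvalues A \<Longrightarrow> cmod l \<le> spectral_radius A"
  unfolding spectral_radius_eq_Max using finite_eigenvalues by (intro Max_ge) auto

lemma spectral_radius_le: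
  "eigenvalues A \<noteq> {} \<Longrightarrow> (\<And>l. l \<in> eigenvalues A \<Longrightarrow> cmod l \<le> t) \<Longrightarrow> spectral_radius A \<le> t"
  unfolding spectral_radius_eq_Max using finite_eigenvalues by (subst Max_le_iff) auto

lemma eigenvalues_similar_subset:
  fixes S :: "real^'n^'n"
  assumes "S ** X = Y ** S" "invertible S"
  shows "eigenvalues X \<subseteq> eigenvalues Y"
proof
  fix l assume "l \<in> eigenvalues X"
  then obtain v where v: "v \<noteq> 0" "cmat X *v v = l *s v" unfolding eigenvalues_def by blast
  have "cmat (matrix_inv S) ** cmat S = mat 1"
    using matrix_inv_left[OF assms(2)] by (simp flip: cmat_mult add: cmat_mat_1)
  then have Sv: "cmat S *v v \<noteq> 0" using v(1)
    by (metis matrix_vector_mul_assoc matrix_vector_mul_lid matrix_vector_mult_0_right)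
  have "cmat Y *v (cmat S *v v) = cmat S *v (cmat X *v v)"
    by (simp add: matrix_vector_mul_assoc flip: cmat_mult assms(1))
  also have "\<dots> = l *s (cmat S *v v)" using v(2) by (simp add: matrix_vector_mult_smult)
  finally show "l \<in> eigenvalues Y" using Sv unfolding eigenvalues_def by blast
qed

lemma spectral_radius_similar:
  fixes S :: "real^'n^'n"
  assumes "S ** X = Y ** S" "invertible S"
  shows "spectral_radius X = spectral_radius Y"
proof -
  let ?S' = "matrix_inv S"
  have "?S' ** Y = ?S' ** Y ** (S ** ?S')" using matrix_inv_right[OF assms(2)] by simp
  also have "\<dots> = ?S' ** (S ** X) ** ?S'" by (simp add: assms(1) matrix_mul_assoc)
  also have "\<dots> = X ** ?S'" using matrix_inv_left[OF assms(2)] by (simp add: matrix_mul_assoc)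
  finally have "?S' ** Y = X ** ?S'" .
  moreover have "invertible ?S'"
    using assms(2) matrix_inv_left matrix_inv_right invertible_def by blast
  ultimately have "eigenvalues X = eigenvalues Y"
    using eigenvalues_similar_subset assms by (metis subset_antisym)
  then show ?thesis by (simp add: spectral_radius_eq_Max)
qed

definition Re_vec :: "complex^'n \<Rightarrow> real^'n" where
  "Re_vec v = (\<chi> j. Re (v $ j))"

definition Im_vec :: "complex^'n \<Rightarrow> real^'n" where
  "Im_vec v = (\<chi> j. Im (v $ j))"

lemma Re_cmat_mult: "Re ((cmat M *v v) $ i) = (M *v Re_vec v) $ i"
  by (simp add: cmat_def Re_vec_def matrix_vector_mult_def)

lemma Im_cmat_mult: "Im ((cmat M *v v) $ i) = (M *v Im_vec v) $ i"
  by (simp add: cmat_def Im_vec_def matrix_vector_mult_def)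

lemma cmat_matpow_eigenvector:
  assumes "cmat B *v v = l *s v"
  shows "cmat (matpow B k) *v v = l ^ k *s v"
proof (induction k)
  case (Suc k)
  have "cmat (matpow B (Suc k)) *v v = cmat B *v (cmat (matpow B k) *v v)"
    by (simp add: cmat_mult matrix_vector_mul_assoc)
  also have "\<dots> = l ^ Suc k *s v"
    using Suc assms by (simp add: matrix_vector_mult_smult vector_smult_assoc mult.commute)
  finally show ?case .
qed (simp add: cmat_mat_1)

section \<open>The Krein-Rutman theorem and Collatz-Wielandt bounds\<close>

lemma subinvariant_matpow:
  assumes K: "proper_cone K" and B: "K_nonneg K B" and t: "t *\<^sub>R y - B *v y \<in> K" "0 \<le> t"
  shows "t ^ k *\<^sub>R y - matpow B k *v y \<in> K"
proof (induction k)
  case (Suc k)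
  have "t ^ Suc k *\<^sub>R y - matpow B (Suc k) *v y
      = B *v (t ^ k *\<^sub>R y - matpow B k *v y) + t ^ k *\<^sub>R (t *\<^sub>R y - B *v y)"
    by (simp add: matrix_vector_mult_diff_distrib matrix_vector_mul_assoc matrix_vector_mult_scaleR algebra_simps)
  also have "\<dots> \<in> K"
    using Suc B t by (intro proper_cone_add[OF K] proper_cone_scaleR[OF K]) (auto simp: K_nonneg_def)
  finally show ?case .
qed (simp add: proper_cone_zero[OF K])

lemma superinvariant_matpow:
  assumes K: "proper_cone K" and B: "K_nonneg K B" and t: "B *v y - t *\<^sub>R y \<in> K" "0 \<le> t"
  shows "matpow B k *v y - t ^ k *\<^sub>R y \<in> K"
proof (induction k)
  case (Suc k)
  have "matpow B (Suc k) *v y - t ^ Suc k *\<^sub>R y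
      = B *v (matpow B k *v y - t ^ k *\<^sub>R y) + t ^ k *\<^sub>R (B *v y - t *\<^sub>R y)"
    by (simp add: matrix_vector_mult_diff_distrib matrix_vector_mul_assoc matrix_vector_mult_scaleR algebra_simps)
  also have "\<dots> \<in> K"
    using Suc B t by (intro proper_cone_add[OF K] proper_cone_scaleR[OF K]) (auto simp: K_nonneg_def)
  finally show ?case .
qed (simp add: proper_cone_zero[OF K])

lemma subinvariant_nonneg:
  assumes K: "proper_cone K" and B: "K_nonneg K B" and y: "y \<in> interior K"
    and t: "t *\<^sub>R y - B *v y \<in> K"
  shows "0 \<le> t"
proof (rule ccontr)
  assume "\<not> 0 \<le> t"
  have yK: "y \<in> K" using y interior_subset by blast
  have "t *\<^sub>R y = (t *\<^sub>R y - B *v y) + B *v y" by simp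
  also have "\<dots> \<in> K" using t B yK by (intro proper_cone_add[OF K]) (auto simp: K_nonneg_def)
  finally have ty: "t *\<^sub>R y \<in> K" .
  have "0 \<le> - 1 / t" using \<open>\<not> 0 \<le> t\<close> by simp
  from proper_cone_scaleR[OF K ty this] have "(- 1 / t) *\<^sub>R (t *\<^sub>R y) \<in> K" .
  then have "- y \<in> K" using \<open>\<not> 0 \<le> t\<close> by simp
  then show False
    using proper_cone_pointed[OF K yK] proper_cone_interior_nonzero[OF K y] by simp
qed

text \<open>Normality of \<open>K\<close> turns the order bound \<open>B\<^sup>k y \<le> t\<^sup>k y\<close> into a norm bound on all orbits.\<close>
lemma matpow_bounded_by_subinvariant:
  assumes K: "proper_cone K" and B: "K_nonneg K B" and y: "y \<in> interior K"
    and t: "t *\<^sub>R y - B *v y \<in> K"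
  obtains C where "\<And>k. norm (matpow B k *v w) \<le> C * t ^ k"
proof -
  have t0: "0 \<le> t" using subinvariant_nonneg[OF K B y t] .
  note pw = subinvariant_matpow[OF K B t t0]
  obtain N where N: "\<And>a z. a - z \<in> K \<Longrightarrow> a + z \<in> K \<Longrightarrow> norm z \<le> N * norm a"
    using proper_cone_normal[OF K] by blast
  obtain c where c: "c > 0" "c *\<^sub>R y - w \<in> K" "c *\<^sub>R y + w \<in> K"
    using proper_cone_interior_dominates[OF K y] by blast
  have "norm (matpow B k *v w) \<le> (N * c * norm y) * t ^ k" for k
  proof -
    let ?a = "(c * t ^ k) *\<^sub>R y" and ?z = "matpow B k *v w"
    have "?a - ?z = c *\<^sub>R (t ^ k *\<^sub>R y - matpow B k *v y) + matpow B k *v (c *\<^sub>R y - w)"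
      by (simp add: matrix_vector_mult_diff_distrib matrix_vector_mult_scaleR algebra_simps)
    also have "\<dots> \<in> K"
      using pw c K_nonneg_matpow[OF B]
      by (intro proper_cone_add[OF K] proper_cone_scaleR[OF K]) (auto simp: K_nonneg_def)
    finally have minus: "?a - ?z \<in> K" .
    have "?a + ?z = c *\<^sub>R (t ^ k *\<^sub>R y - matpow B k *v y) + matpow B k *v (c *\<^sub>R y + w)"
      by (simp add: matrix_vector_right_distrib matrix_vector_mult_diff_distrib
          matrix_vector_mult_scaleR algebra_simps)
    also have "\<dots> \<in> K"
      using pw c K_nonneg_matpow[OF B]
      by (intro proper_cone_add[OF K] proper_cone_scaleR[OF K]) (auto simp: K_nonneg_def)
    finally have plus: "?a + ?z \<in> K" .
    have "norm ?z \<le> N * norm ?a" using N[OF minus plus] .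
    also have "\<dots> = (N * c * norm y) * t ^ k" using c t0 by (simp add: abs_mult)
    finally show ?thesis .
  qed
  then show ?thesis using that by blast
qed

lemma eigenvalue_le_subinvariant:
  assumes K: "proper_cone K" and B: "K_nonneg K B" and y: "y \<in> interior K"
    and t: "t *\<^sub>R y - B *v y \<in> K" and l: "l \<in> eigenvalues B"
  shows "cmod l \<le> t"
proof (rule ccontr)
  assume "\<not> cmod l \<le> t"
  have t0: "0 \<le> t" using subinvariant_nonneg[OF K B y t] .
  obtain v where v: "v \<noteq> 0" "cmat B *v v = l *s v" using l unfolding eigenvalues_def by blast
  obtain i where i: "v $ i \<noteq> 0" using v(1) by (metis vec_eq_iff zero_index)
  obtain C1 where C1: "\<And>k. norm (matpow B k *v Re_vec v) \<le> C1 * t ^ k"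
    using matpow_bounded_by_subinvariant[OF K B y t] by blast
  obtain C2 where C2: "\<And>k. norm (matpow B k *v Im_vec v) \<le> C2 * t ^ k"
    using matpow_bounded_by_subinvariant[OF K B y t] by blast
  have bound: "cmod l ^ k * cmod (v $ i) \<le> (C1 + C2) * t ^ k" for k
  proof -
    have "cmod l ^ k * cmod (v $ i) = cmod ((cmat (matpow B k) *v v) $ i)"
      using cmat_matpow_eigenvector[OF v(2), of k] by (simp add: norm_mult norm_power)
    also have "\<dots> \<le> \<bar>Re ((cmat (matpow B k) *v v) $ i)\<bar> + \<bar>Im ((cmat (matpow B k) *v v) $ i)\<bar>"
      by (rule cmod_le)
    also have "\<dots> \<le> norm (matpow B k *v Re_vec v) + norm (matpow B k *v Im_vec v)"
      unfolding Re_cmat_mult Im_cmat_mult by (intro add_mono component_le_norm_cart)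
    also have "\<dots> \<le> (C1 + C2) * t ^ k" using C1[of k] C2[of k] by (simp add: algebra_simps)
    finally show ?thesis .
  qed
  have vi: "cmod (v $ i) > 0" using i by simp
  show False
  proof (cases "t = 0")
    case True
    then have "0 < cmod l * cmod (v $ i)" using \<open>\<not> cmod l \<le> t\<close> vi by (intro mult_pos_pos) auto
    then show False using bound[of 1] True by simp
  next
    case False
    then have tp: "t > 0" using t0 by simp
    have "1 < cmod l / t" using \<open>\<not> cmod l \<le> t\<close> tp by (simp add: divide_simps)
    then obtain n where n: "(C1 + C2) / cmod (v $ i) < (cmod l / t) ^ n"
      using real_arch_pow by blast
    have "(cmod l / t) ^ n * cmod (v $ i) = cmod l ^ n * cmod (v $ i) / t ^ n"
      by (simp add: power_divide)
    also have "\<dots> \<le> C1 + C2" using bound[of n] tp by (simp add: divide_simps)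
    finally have "(cmod l / t) ^ n \<le> (C1 + C2) / cmod (v $ i)" using vi by (simp add: divide_simps)
    then show False using n by simp
  qed
qed

text \<open>Brouwer's theorem for the normalised map \<open>x \<mapsto> (B x + \<epsilon> e) / \<parallel>B x + \<epsilon> e\<parallel>\<close> on
  \<open>K \<inter> cball 0 1\<close>; the perturbation by the interior point \<open>e\<close> keeps the denominator nonzero.\<close>
lemma perturbed_cone_eigenvector:
  assumes K: "proper_cone K" and B: "K_nonneg K B" and e: "e \<in> interior K" and eps: "0 < \<epsilon>"
  obtains x m where "x \<in> interior K" "norm x = 1" "0 < m" "B *v x + \<epsilon> *\<^sub>R e = m *\<^sub>R x"
proof -
  define S where "S = K \<inter> cball 0 1"
  define g where "g x = B *v x + \<epsilon> *\<^sub>R e" for x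
  define f where "f x = inverse (norm (g x)) *\<^sub>R g x" for x
  have g_int: "g x \<in> interior K" if "x \<in> K" for x
    unfolding g_def using that B
    by (intro proper_cone_add_interior[OF K] proper_cone_scaleR_interior[OF K eps e])
      (auto simp: K_nonneg_def)
  have g_nz: "g x \<noteq> 0" if "x \<in> K" for x
    using proper_cone_interior_nonzero[OF K g_int[OF that]] .
  have "compact S" unfolding S_def by (intro closed_Int_compact proper_cone_closed[OF K] compact_cball)
  moreover have "convex S"
    using K unfolding S_def proper_cone_def by (intro convex_Int convex_cball) auto
  moreover have "S \<noteq> {}" unfolding S_def using proper_cone_zero[OF K] by auto
  moreover have "continuous_on S f"
    unfolding f_def g_def
    by (intro continuous_intros linear_continuous_on matrix_vector_mul_bounded_linear)
      (auto simp: S_def g_nz[unfolded g_def])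
  moreover have "f \<in> S \<rightarrow> S"
  proof
    fix x assume "x \<in> S"
    then have x: "x \<in> K" by (simp add: S_def)
    have "f x \<in> K"
      unfolding f_def using g_int[OF x] interior_subset by (intro proper_cone_scaleR[OF K]) auto
    moreover have "norm (f x) = 1" unfolding f_def using g_nz[OF x] by simp
    ultimately show "f x \<in> S" by (simp add: S_def)
  qed
  ultimately obtain x where x: "x \<in> S" "f x = x" using brouwer by blast
  have xK: "x \<in> K" using x by (simp add: S_def)
  define m where "m = norm (g x)"
  have m: "m > 0" using g_nz[OF xK] by (simp add: m_def)
  have x_eq: "x = inverse m *\<^sub>R g x" using x(2) unfolding f_def m_def by simp
  show ?thesis
  proof (rule that)
    show "x \<in> interior K"
      using x_eq proper_cone_scaleR_interior[OF K _ g_int[OF xK], of "inverse m"] m by simp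
    have "norm x = inverse m * m" by (subst x_eq) (simp add: m_def)
    then show "norm x = 1" using m by simp
    show "0 < m" by (rule m)
    have "m *\<^sub>R x = (m * inverse m) *\<^sub>R g x" by (subst x_eq) simp
    then show "B *v x + \<epsilon> *\<^sub>R e = m *\<^sub>R x" using m by (simp add: g_def)
  qed
qed

lemma cone_eigenvector_limit:
  fixes B :: "real^'n^'n"
  assumes K: "proper_cone K" and B: "K_nonneg K B"
  obtains x \<mu> where "x \<in> K" "x \<noteq> 0" "B *v x = \<mu> *\<^sub>R x" "0 \<le> \<mu>"
    "\<And>t. \<mu> < t \<Longrightarrow> \<exists>y \<in> interior K. t *\<^sub>R y - B *v y \<in> K"
proof -
  obtain e where e: "e \<in> interior K" using K by (auto simp: proper_cone_def)
  define eps where "eps k = inverse (real (Suc k))" for k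
  have eps: "0 < eps k" for k by (simp add: eps_def)
  have "\<forall>k. \<exists>x m. x \<in> interior K \<and> norm x = 1 \<and> 0 < m \<and> B *v x + eps k *\<^sub>R e = m *\<^sub>R x"
    using perturbed_cone_eigenvector[OF K B e eps] by metis
  then obtain X M where X: "\<And>k. X k \<in> interior K" "\<And>k. X k \<in> sphere 0 1"
    and M: "\<And>k. 0 < M k" "\<And>k. B *v X k + eps k *\<^sub>R e = M k *\<^sub>R X k"
    by (metis mem_sphere_0)
  have XK: "X k \<in> K" for k using X(1) interior_subset by blast
  have M_eq: "M k = norm (B *v X k + eps k *\<^sub>R e)" for k using M(1,2)[of k] X(2)[of k] by simp
  obtain x r where x: "x \<in> sphere 0 1" and r: "strict_mono r" and lim_X: "(X \<circ> r) \<longlonglongrightarrow> x"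
    using compact_imp_seq_compact[OF compact_sphere, of 0 1] X(2) unfolding seq_compact_def by metis
  define \<mu> where "\<mu> = norm (B *v x)"
  have "(\<lambda>k. eps (r k)) \<longlonglongrightarrow> 0"
    using LIMSEQ_subseq_LIMSEQ[OF LIMSEQ_inverse_real_of_nat r] by (simp add: o_def eps_def)
  then have lim_B: "(\<lambda>k. B *v X (r k) + eps (r k) *\<^sub>R e) \<longlonglongrightarrow> B *v x"
    using lim_X tendsto_add[OF bounded_linear.tendsto[OF matrix_vector_mul_bounded_linear]
        tendsto_scaleR[OF _ tendsto_const]] by (fastforce simp: o_def)
  then have lim_M: "(\<lambda>k. M (r k)) \<longlonglongrightarrow> \<mu>" unfolding M_eq \<mu>_def by (rule tendsto_norm)
  have "(\<lambda>k. M (r k) *\<^sub>R X (r k)) \<longlonglongrightarrow> \<mu> *\<^sub>R x"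
    using lim_X lim_M by (intro tendsto_intros) (simp_all add: o_def)
  then have "B *v x = \<mu> *\<^sub>R x" using LIMSEQ_unique[OF lim_B] M(2) by simp
  moreover have "x \<in> K"
    using closed_sequentially[OF proper_cone_closed[OF K], of "X \<circ> r"] XK lim_X by auto
  moreover have "\<exists>y \<in> interior K. t *\<^sub>R y - B *v y \<in> K" if t: "\<mu> < t" for t
  proof -
    obtain k where k: "M (r k) < t"
      using order_tendstoD(2)[OF lim_M t] by (auto simp: eventually_sequentially)
    have "t *\<^sub>R X (r k) - B *v X (r k) = (t - M (r k)) *\<^sub>R X (r k) + eps (r k) *\<^sub>R e"
      using M(2)[of "r k"] by (simp add: algebra_simps)
    also have "\<dots> \<in> K"
      using k XK eps[of "r k"] e interior_subset
      by (intro proper_cone_add[OF K] proper_cone_scaleR[OF K]) auto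
    finally show ?thesis using X(1) by blast
  qed
  ultimately show ?thesis using x by (intro that[of x \<mu>]) (auto simp: \<mu>_def)
qed

lemma spectral_radius_cone:
  fixes B :: "real^'n^'n"
  assumes K: "proper_cone K" and B: "K_nonneg K B"
  shows "0 \<le> spectral_radius B"
    and "\<exists>x \<in> K. x \<noteq> 0 \<and> B *v x = spectral_radius B *\<^sub>R x"
    and "\<And>t. spectral_radius B < t \<Longrightarrow> \<exists>y \<in> interior K. t *\<^sub>R y - B *v y \<in> K"
proof -
  obtain x \<mu> where x: "x \<in> K" "x \<noteq> 0" "B *v x = \<mu> *\<^sub>R x" and \<mu>: "0 \<le> \<mu>"
    and sub: "\<And>t. \<mu> < t \<Longrightarrow> \<exists>y \<in> interior K. t *\<^sub>R y - B *v y \<in> K"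
    using cone_eigenvector_limit[OF K B] by blast
  have \<mu>_eig: "complex_of_real \<mu> \<in> eigenvalues B" using of_real_eigenvalue[OF x(2,3)] .
  have "spectral_radius B = \<mu>"
  proof (rule antisym)
    show "spectral_radius B \<le> \<mu>"
    proof (rule spectral_radius_le)
      fix l assume l: "l \<in> eigenvalues B"
      show "cmod l \<le> \<mu>"
      proof (rule dense_ge)
        fix t assume "\<mu> < t"
        then obtain y where "y \<in> interior K" "t *\<^sub>R y - B *v y \<in> K" using sub by blast
        then show "cmod l \<le> t" using eigenvalue_le_subinvariant[OF K B _ _ l] by blast
      qed
    qed (use \<mu>_eig in blast)
    show "\<mu> \<le> spectral_radius B" using eigenvalue_le_spectral_radius[OF \<mu>_eig] \<mu> by simp
  qed
  then show "0 \<le> spectral_radius B" "\<exists>x \<in> K. x \<noteq> 0 \<and> B *v x = spectral_radius B *\<^sub>R x"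
    "\<And>t. spectral_radius B < t \<Longrightarrow> \<exists>y \<in> interior K. t *\<^sub>R y - B *v y \<in> K"
    using x \<mu> sub by auto
qed

lemma spectral_radius_le_subinvariant:
  fixes B :: "real^'n^'n"
  assumes K: "proper_cone K" and B: "K_nonneg K B" and y: "y \<in> interior K"
    and t: "t *\<^sub>R y - B *v y \<in> K"
  shows "spectral_radius B \<le> t"
proof -
  obtain x where "x \<in> K" "x \<noteq> 0" "B *v x = spectral_radius B *\<^sub>R x"
    using spectral_radius_cone(2)[OF K B] by blast
  then have "eigenvalues B \<noteq> {}" using of_real_eigenvalue by blast
  then show ?thesis using eigenvalue_le_subinvariant[OF K B y t] by (rule spectral_radius_le)
qed

text \<open>If \<open>r > \<rho>(B)\<close>, a subinvariant interior vector for some \<open>t \<in> (\<rho>(B), r)\<close> gives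
  \<open>(t/r)\<^sup>k c y - z \<in> K\<close> for all \<open>k\<close>; letting \<open>k \<rightarrow> \<infinity>\<close> yields \<open>-z \<in> K\<close>.\<close>
lemma superinvariant_le_spectral_radius:
  fixes B :: "real^'n^'n"
  assumes K: "proper_cone K" and B: "K_nonneg K B" and z: "z \<in> K" "z \<noteq> 0"
    and r: "B *v z - r *\<^sub>R z \<in> K" "0 \<le> r"
  shows "r \<le> spectral_radius B"
proof (rule ccontr)
  assume "\<not> r \<le> spectral_radius B"
  define t where "t = (spectral_radius B + r) / 2"
  have t: "spectral_radius B < t" "t < r" "0 < t"
    using \<open>\<not> r \<le> spectral_radius B\<close> spectral_radius_cone(1)[OF K B] by (auto simp: t_def)
  obtain y where y: "y \<in> interior K" "t *\<^sub>R y - B *v y \<in> K"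
    using spectral_radius_cone(3)[OF K B t(1)] by blast
  obtain c where c: "c > 0" "c *\<^sub>R y - z \<in> K"
    using proper_cone_interior_dominates[OF K y(1)] by blast
  have r0: "r > 0" using t by simp
  have mem: "(c * (t / r) ^ k) *\<^sub>R y - z \<in> K" for k
  proof -
    have "(c * t ^ k) *\<^sub>R y - r ^ k *\<^sub>R z
       = c *\<^sub>R (t ^ k *\<^sub>R y - matpow B k *v y) + matpow B k *v (c *\<^sub>R y - z)
         + (matpow B k *v z - r ^ k *\<^sub>R z)"
      by (simp add: matrix_vector_mult_diff_distrib matrix_vector_mult_scaleR algebra_simps)
    also have "\<dots> \<in> K"
      using subinvariant_matpow[OF K B y(2)] superinvariant_matpow[OF K B r] t c K_nonneg_matpow[OF B]
      by (intro proper_cone_add[OF K] proper_cone_scaleR[OF K]) (auto simp: K_nonneg_def)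
    finally have "(1 / r ^ k) *\<^sub>R ((c * t ^ k) *\<^sub>R y - r ^ k *\<^sub>R z) \<in> K"
      using r0 by (intro proper_cone_scaleR[OF K]) auto
    then show ?thesis using r0 by (simp add: scaleR_diff_right power_divide)
  qed
  have "(\<lambda>k. (c * (t / r) ^ k) *\<^sub>R y - z) \<longlonglongrightarrow> (c * 0) *\<^sub>R y - z"
    using t by (intro tendsto_intros LIMSEQ_power_zero) auto
  then have "- z \<in> K" using closed_sequentially[OF proper_cone_closed[OF K]] mem by fastforce
  then show False using proper_cone_pointed[OF K z(1)] z(2) by simp
qed

section \<open>Comparison of iteration matrices\<close>

lemma K_nonneg_invertible_interior:
  fixes M :: "real^'n^'n"
  assumes M: "invertible M" "K_nonneg K M" and y: "y \<in> interior K"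
  shows "M *v y \<in> interior K"
proof -
  have "inj ((*v) M)"
    by (rule inj_on_inverseI[of _ "(*v) (matrix_inv M)"])
      (simp add: matrix_vector_mul_assoc matrix_inv_left[OF M(1)])
  then have "interior ((*v) M ` K) = (*v) M ` interior K"
    by (intro interior_injective_linear_image matrix_vector_mul_linear)
  moreover have "(*v) M ` K \<subseteq> K" using M(2) by (auto simp: K_nonneg_def)
  ultimately show ?thesis using y interior_mono by blast
qed

lemma spectral_radius_mult_commute:
  assumes "invertible (A::real^'n^'n)"
  shows "spectral_radius (mat 1 - N ** A) = spectral_radius (mat 1 - A ** N)"
  by (rule spectral_radius_similar[OF _ assms])
    (simp add: matrix_diff_ldistrib matrix_diff_rdistrib matrix_mul_assoc)

lemma invertible_if_spectral_radius_lt_one: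
  fixes A N :: "real^'n^'n"
  assumes "spectral_radius (mat 1 - A ** N) < 1"
  shows "invertible N"
proof -
  have "y = 0" if Ny: "N *v y = 0" for y
  proof (rule ccontr)
    assume "y \<noteq> 0"
    moreover have "(mat 1 - A ** N) *v y = 1 *\<^sub>R y"
      using Ny by (simp add: matrix_vector_mult_diff_rdistrib flip: matrix_vector_mul_assoc)
    ultimately have "1 \<le> spectral_radius (mat 1 - A ** N)"
      using of_real_eigenvalue eigenvalue_le_spectral_radius by fastforce
    with assms show False by simp
  qed
  then show ?thesis using matrix_left_invertible_ker invertible_left_inverse by blast
qed

lemma hat_iteration_eigenvector:
  fixes A N :: "real^'n^'n"
  assumes "invertible A" "(mat 1 - A ** N) *v x = r *\<^sub>R x"
  shows "N *v x = (1 - r) *\<^sub>R (matrix_inv A *v x)"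
proof -
  have "A *v (N *v x) = (1 - r) *\<^sub>R x"
    using assms(2) by (simp add: matrix_vector_mult_diff_rdistrib matrix_vector_mul_assoc algebra_simps)
  then show ?thesis
    by (metis matrix_vector_mul_assoc matrix_inv_left[OF assms(1)] matrix_vector_mul_lid
        matrix_vector_mult_scaleR)
qed

lemma hat_iteration_mult_inverse:
  fixes A N :: "real^'n^'n"
  assumes "invertible N"
  shows "(mat 1 - A ** N) ** matrix_inv N = matrix_inv N - A"
  by (simp add: matrix_diff_rdistrib matrix_inv_right[OF assms] flip: matrix_mul_assoc)

lemma iteration_eq_mult_hat:
  fixes A N :: "real^'n^'n"
  assumes "invertible N"
  shows "mat 1 - N ** A = N ** ((mat 1 - A ** N) ** matrix_inv N)"
  by (simp add: hat_iteration_mult_inverse[OF assms] matrix_diff_ldistrib matrix_inv_right[OF assms])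

text \<open>A Perron eigenvector \<open>x\<close> for an eigenvalue \<open>r \<ge> 1\<close> would give
  \<open>N x = (1 - r) A\<^sup>-\<^sup>1 x \<in> -K\<close>.\<close>
lemma spectral_radius_lt_one:
  fixes A N :: "real^'n^'n"
  assumes K: "proper_cone K" and A: "K_monotone K A"
    and B: "K_nonneg K (mat 1 - A ** N)" and N: "K_nonneg K N"
    and N_inj: "\<And>x. x \<in> K \<Longrightarrow> N *v x = 0 \<Longrightarrow> x = 0"
  shows "spectral_radius (mat 1 - A ** N) < 1"
proof (rule ccontr)
  define r where "r = spectral_radius (mat 1 - A ** N)"
  assume "\<not> spectral_radius (mat 1 - A ** N) < 1"
  then have r: "1 \<le> r" by (simp add: r_def)
  obtain x where x: "x \<in> K" "x \<noteq> 0" "(mat 1 - A ** N) *v x = r *\<^sub>R x"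
    using spectral_radius_cone(2)[OF K B] by (auto simp: r_def)
  have invA: "invertible A" and Ai: "K_nonneg K (matrix_inv A)"
    using A by (auto simp: K_monotone_def)
  have "- (N *v x) = (r - 1) *\<^sub>R (matrix_inv A *v x)"
    using hat_iteration_eigenvector[OF invA x(3)] by (simp add: algebra_simps)
  also have "\<dots> \<in> K" using r Ai x(1) by (intro proper_cone_scaleR[OF K]) (auto simp: K_nonneg_def)
  finally have "N *v x = 0" using proper_cone_pointed[OF K] N x(1) by (auto simp: K_nonneg_def)
  then show False using N_inj x(1,2) by blast
qed

text \<open>A subinvariant interior vector \<open>y\<close> of \<open>I - A N'\<close> yields the subinvariant interior
  vector \<open>A\<^sup>-\<^sup>1 y\<close> of \<open>I - N A\<close>.\<close>
lemma spectral_radius_comparison_inverse_geq: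
  fixes A N N' :: "real^'n^'n"
  assumes K: "proper_cone K" and A: "K_monotone K A"
    and B: "K_nonneg K (mat 1 - N ** A)" and B': "K_nonneg K (mat 1 - A ** N')"
    and NN': "K_geq K N N'"
  shows "spectral_radius (mat 1 - N ** A) \<le> spectral_radius (mat 1 - A ** N')"
proof (rule dense_ge)
  fix t assume "spectral_radius (mat 1 - A ** N') < t"
  then obtain y where y: "y \<in> interior K" "t *\<^sub>R y - (mat 1 - A ** N') *v y \<in> K"
    using spectral_radius_cone(3)[OF K B'] by blast
  have invA: "invertible A" and Ai: "K_nonneg K (matrix_inv A)"
    using A by (auto simp: K_monotone_def)
  define w where "w = matrix_inv A *v y"
  have "invertible (matrix_inv A)"
    using invA matrix_inv_left matrix_inv_right invertible_def by blast
  then have w: "w \<in> interior K" unfolding w_def by (rule K_nonneg_invertible_interior[OF _ Ai y(1)])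
  have y_eq: "y = A *v w" by (simp add: w_def matrix_vector_mul_assoc matrix_inv_right[OF invA])
  have "matrix_inv A *v (t *\<^sub>R y - (mat 1 - A ** N') *v y) = t *\<^sub>R w - w + N' *v y"
    by (simp add: w_def matrix_vector_mult_diff_distrib matrix_vector_mult_diff_rdistrib
        matrix_vector_mult_scaleR matrix_vector_mul_assoc matrix_mul_assoc matrix_inv_left[OF invA])
  moreover have "(mat 1 - N ** A) *v w = w - N *v y"
    by (simp add: y_eq matrix_vector_mult_diff_rdistrib matrix_vector_mul_assoc)
  ultimately have "t *\<^sub>R w - (mat 1 - N ** A) *v w
      = (N - N') *v y + matrix_inv A *v (t *\<^sub>R y - (mat 1 - A ** N') *v y)"
    by (simp add: matrix_vector_mult_diff_rdistrib algebra_simps)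
  also have "\<dots> \<in> K"
    using NN' Ai y interior_subset by (intro proper_cone_add[OF K]) (auto simp: K_geq_def K_nonneg_def)
  finally show "spectral_radius (mat 1 - N ** A) \<le> t"
    by (rule spectral_radius_le_subinvariant[OF K B w])
qed

text \<open>If \<open>x\<close> is a Perron eigenvector of \<open>I - A N\<close> for \<open>r\<close>, then \<open>z = N'\<^sup>-\<^sup>1 A\<^sup>-\<^sup>1 x\<close> is
  superinvariant for \<open>I - A N'\<close> with the same \<open>r\<close>.\<close>
lemma spectral_radius_comparison_inverse_leq:
  fixes A N N' :: "real^'n^'n"
  assumes K: "proper_cone K" and A: "K_monotone K A" and N: "invertible N" "invertible N'"
    and B: "K_nonneg K (mat 1 - A ** N)" and B': "K_nonneg K (mat 1 - A ** N')"
    and lt: "spectral_radius (mat 1 - A ** N) < 1"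
    and PP': "K_geq K (matrix_inv N') (matrix_inv N)"
  shows "spectral_radius (mat 1 - A ** N) \<le> spectral_radius (mat 1 - A ** N')"
proof -
  define r where "r = spectral_radius (mat 1 - A ** N)"
  have r: "0 \<le> r" "r < 1" using spectral_radius_cone(1)[OF K B] lt by (auto simp: r_def)
  obtain x where x: "x \<in> K" "x \<noteq> 0" "(mat 1 - A ** N) *v x = r *\<^sub>R x"
    using spectral_radius_cone(2)[OF K B] by (auto simp: r_def)
  have invA: "invertible A" and Ai: "K_nonneg K (matrix_inv A)"
    using A by (auto simp: K_monotone_def)
  define y where "y = matrix_inv A *v x"
  have yK: "y \<in> K" using Ai x(1) by (simp add: y_def K_nonneg_def)
  have x_eq: "x = A *v y" by (simp add: y_def matrix_vector_mul_assoc matrix_inv_right[OF invA])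
  have "x = (1 - r) *\<^sub>R (matrix_inv N *v y)"
    using hat_iteration_eigenvector[OF invA x(3), folded y_def]
    by (metis matrix_vector_mul_assoc matrix_inv_left[OF N(1)] matrix_vector_mul_lid
        matrix_vector_mult_scaleR)
  then have Py: "matrix_inv N *v y = (1 / (1 - r)) *\<^sub>R x" using r by simp
  define d where "d = (matrix_inv N' - matrix_inv N) *v y"
  have dK: "d \<in> K" using PP' yK by (simp add: d_def K_geq_def K_nonneg_def)
  define z where "z = matrix_inv N' *v y"
  have z_eq: "z = d + (1 / (1 - r)) *\<^sub>R x"
    by (simp add: z_def d_def matrix_vector_mult_diff_rdistrib Py)
  have zK: "z \<in> K"
    unfolding z_eq using dK x(1) r by (intro proper_cone_add[OF K] proper_cone_scaleR[OF K]) auto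
  have z_scaled: "(1 - r) *\<^sub>R z = (1 - r) *\<^sub>R d + x" using r by (simp add: z_eq scaleR_add_right)
  have "z \<noteq> 0"
  proof
    assume "z = 0"
    with z_scaled have "- x = (1 - r) *\<^sub>R d" by (metis add.commute neg_eq_iff_add_eq_0 scaleR_zero_right)
    also have "\<dots> \<in> K" using dK r by (intro proper_cone_scaleR[OF K]) auto
    finally show False using proper_cone_pointed[OF K x(1)] x(2) by simp
  qed
  have "(mat 1 - A ** N') *v z = z - x"
    by (simp add: z_def x_eq matrix_vector_mul_assoc hat_iteration_mult_inverse[OF N(2)]
        matrix_vector_mult_diff_rdistrib)
  then have "(mat 1 - A ** N') *v z - r *\<^sub>R z = (1 - r) *\<^sub>R z - x"
    by (simp add: algebra_simps)
  also have "\<dots> = (1 - r) *\<^sub>R d" by (simp add: z_scaled)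
  also have "\<dots> \<in> K" using dK r by (intro proper_cone_scaleR[OF K]) auto
  finally have "r \<le> spectral_radius (mat 1 - A ** N')"
    using superinvariant_le_spectral_radius[OF K B' zK \<open>z \<noteq> 0\<close> _ r(1)] by blast
  then show ?thesis by (simp add: r_def)
qed

section \<open>Inner iterations of a weak regular splitting of type II\<close>

definition inner_inverse :: "real^'n^'n \<Rightarrow> real^'n^'n \<Rightarrow> nat \<Rightarrow> real^'n^'n" where
  "inner_inverse F G s = (\<Sum>j<s. matpow (matrix_inv F ** G) j ** matrix_inv F)"

lemma inner_inverse_left:
  "inner_inverse F G s = (\<Sum>j<s. matpow (matrix_inv F ** G) j) ** matrix_inv F"
  by (simp add: inner_inverse_def matrix_sum_rdistrib)

lemma inner_inverse_right:
  "inner_inverse F G s = matrix_inv F ** (\<Sum>j<s. matpow (G ** matrix_inv F) j)"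
  unfolding inner_inverse_def matrix_sum_ldistrib
  by (intro sum.cong refl matpow_intertwine) (simp add: matrix_mul_assoc)

lemma inner_inverse_mult_splitting:
  assumes "invertible F"
  shows "inner_inverse F G s ** (F - G) = mat 1 - matpow (matrix_inv F ** G) s"
proof -
  have "matrix_inv F ** (F - G) = mat 1 - matrix_inv F ** G"
    by (simp add: matrix_diff_ldistrib matrix_inv_left[OF assms])
  then show ?thesis
    by (simp add: inner_inverse_left sum_matpow_telescope_right flip: matrix_mul_assoc)
qed

lemma splitting_mult_inner_inverse:
  assumes "invertible F"
  shows "(F - G) ** inner_inverse F G s = mat 1 - matpow (G ** matrix_inv F) s"
proof -
  have "(F - G) ** matrix_inv F = mat 1 - G ** matrix_inv F"
    by (simp add: matrix_diff_rdistrib matrix_inv_right[OF assms])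
  then show ?thesis
    by (simp add: inner_inverse_right sum_matpow_telescope_left matrix_mul_assoc)
qed

lemma K_nonneg_inner_inverse:
  assumes "proper_cone K" "K_nonneg K (matrix_inv F)" "K_nonneg K (G ** matrix_inv F)"
  shows "K_nonneg K (inner_inverse F G s)"
  unfolding inner_inverse_right
  by (intro K_nonneg_mult K_nonneg_sum[OF assms(1)] K_nonneg_matpow[OF assms(3)] assms(2))

lemma inner_inverse_cone_kernel:
  assumes K: "proper_cone K" and F: "invertible F" "K_nonneg K (matrix_inv F)"
    and GF: "K_nonneg K (G ** matrix_inv F)" and s: "1 \<le> s"
    and x: "x \<in> K" "inner_inverse F G s *v x = 0"
  shows "x = 0"
proof -
  obtain s' where s': "s = Suc s'" using s by (cases s) auto
  define W where "W = matrix_inv F ** (\<Sum>j<s'. matpow (G ** matrix_inv F) (Suc j))"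
  have W: "K_nonneg K W"
    unfolding W_def by (intro K_nonneg_mult K_nonneg_sum[OF K] K_nonneg_matpow[OF GF] F(2))
  have "inner_inverse F G s = matrix_inv F + W"
    unfolding inner_inverse_right s' W_def sum.lessThan_Suc_shift by (simp add: matrix_add_ldistrib)
  then have "matrix_inv F *v x + W *v x = 0" using x(2) by (simp add: matrix_vector_mult_add_rdistrib)
  then have "- (matrix_inv F *v x) = W *v x" by (simp only: neg_eq_iff_add_eq_0)
  also have "\<dots> \<in> K" using W x(1) by (simp add: K_nonneg_def)
  finally have "matrix_inv F *v x = 0"
    using proper_cone_pointed[OF K] F(2) x(1) by (auto simp: K_nonneg_def)
  then have "F *v (matrix_inv F *v x) = 0" by simp
  then show "x = 0" by (simp add: matrix_vector_mul_assoc matrix_inv_right[OF F(1)])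
qed

lemma iteration_matrix_eq:
  assumes "invertible F" "A = (F - G) - V"
  shows "matpow (matrix_inv F ** G) s + (\<Sum>j<s. matpow (matrix_inv F ** G) j ** matrix_inv F ** V)
    = mat 1 - inner_inverse F G s ** A"
proof -
  have "(\<Sum>j<s. matpow (matrix_inv F ** G) j ** matrix_inv F ** V) = inner_inverse F G s ** V"
    by (simp add: inner_inverse_def matrix_sum_rdistrib)
  then show ?thesis
    unfolding assms(2) matrix_diff_ldistrib[of _ "F - G" V] inner_inverse_mult_splitting[OF assms(1)]
    by simp
qed

lemma hat_iteration_matrix_eq:
  assumes "invertible F" "A = (F - G) - V"
    and comm: "V ** matrix_inv F ** G = G ** matrix_inv F ** V"
  shows "matpow (G ** matrix_inv F) s + (\<Sum>j<s. matpow (G ** matrix_inv F) j ** V ** matrix_inv F)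
    = mat 1 - A ** inner_inverse F G s"
proof -
  have "matpow (G ** matrix_inv F) j ** V = V ** matpow (matrix_inv F ** G) j" for j
    by (rule matpow_intertwine) (simp add: comm matrix_mul_assoc)
  then have "(\<Sum>j<s. matpow (G ** matrix_inv F) j ** V ** matrix_inv F) = V ** inner_inverse F G s"
    by (simp add: inner_inverse_def matrix_sum_ldistrib matrix_mul_assoc)
  then show ?thesis
    unfolding assms(2) matrix_diff_rdistrib[of "F - G" V] splitting_mult_inner_inverse[OF assms(1)]
    by simp
qed

lemma K_nonneg_hat_iteration_matrix:
  assumes "proper_cone K" "K_nonneg K (matrix_inv F)" "K_nonneg K (G ** matrix_inv F)" "K_nonneg K V"
  shows "K_nonneg K (matpow (G ** matrix_inv F) s
    + (\<Sum>j<s. matpow (G ** matrix_inv F) j ** V ** matrix_inv F))"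
  by (intro K_nonneg_add[OF assms(1)] K_nonneg_sum[OF assms(1)] K_nonneg_mult
      K_nonneg_matpow[OF assms(3)] assms(2,4))

lemma K_geq_inner_inverse:
  assumes K: "proper_cone K" and U: "invertible U" "K_nonneg K (matrix_inv U)"
    and FG: "K_weak_regular_splitting_II K U F G" and FG': "K_weak_regular_splitting_II K U F' G'"
    and GF: "K_geq K (G' ** matrix_inv F') (G ** matrix_inv F)"
  shows "K_geq K (inner_inverse F G s) (inner_inverse F' G' s)"
proof -
  have F: "invertible F" "U = F - G" "K_nonneg K (G ** matrix_inv F)"
    and F': "invertible F'" "U = F' - G'"
    using FG FG' by (auto simp: K_weak_regular_splitting_II_def)
  have "inner_inverse F G s - inner_inverse F' G' s
      = matrix_inv U ** (U ** inner_inverse F G s - U ** inner_inverse F' G' s)"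
    by (simp add: matrix_diff_ldistrib matrix_mul_assoc matrix_inv_left[OF U(1)])
  also have "\<dots> = matrix_inv U ** (matpow (G' ** matrix_inv F') s - matpow (G ** matrix_inv F) s)"
    using splitting_mult_inner_inverse[OF F(1), of G s] splitting_mult_inner_inverse[OF F'(1), of G' s]
    by (simp add: F(2)[symmetric] F'(2)[symmetric])
  finally show ?thesis
    using K_nonneg_mult[OF U(2) K_geq_matpow[OF K F(3) GF, of s, unfolded K_geq_def]]
    by (simp add: K_geq_def)
qed

lemma weak_regular_II_inner_iteration:
  fixes K :: "(real^'n) set" and A U V F G :: "real^'n^'n"
  assumes K: "proper_cone K" and A: "K_monotone K A"
    and UV: "K_regular_splitting K A U V" and FG: "K_weak_regular_splitting_II K U F G"
    and comm: "V ** matrix_inv F ** G = G ** matrix_inv F ** V" and s: "1 \<le> s"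
  defines "N \<equiv> inner_inverse F G s"
  shows "matpow (matrix_inv F ** G) s + (\<Sum>j<s. matpow (matrix_inv F ** G) j ** matrix_inv F ** V)
      = mat 1 - N ** A"
    and "matpow (G ** matrix_inv F) s + (\<Sum>j<s. matpow (G ** matrix_inv F) j ** V ** matrix_inv F)
      = mat 1 - A ** N"
    and "K_nonneg K (mat 1 - A ** N)"
    and "spectral_radius (mat 1 - A ** N) < 1"
    and "invertible N"
    and "K_nonneg K N"
proof -
  have F: "invertible F" "K_nonneg K (matrix_inv F)" "K_nonneg K (G ** matrix_inv F)"
    and U: "U = F - G" and V: "A = U - V" "K_nonneg K V"
    using FG UV by (auto simp: K_weak_regular_splitting_II_def K_regular_splitting_def)
  show "matpow (matrix_inv F ** G) s + (\<Sum>j<s. matpow (matrix_inv F ** G) j ** matrix_inv F ** V)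
      = mat 1 - N ** A"
    unfolding N_def using iteration_matrix_eq[OF F(1)] U V by simp
  show hat: "matpow (G ** matrix_inv F) s + (\<Sum>j<s. matpow (G ** matrix_inv F) j ** V ** matrix_inv F)
      = mat 1 - A ** N"
    unfolding N_def using hat_iteration_matrix_eq[OF F(1) _ comm] U V by simp
  show B: "K_nonneg K (mat 1 - A ** N)"
    using K_nonneg_hat_iteration_matrix[OF K F(2,3) V(2), of s] unfolding hat .
  show N: "K_nonneg K N" unfolding N_def by (rule K_nonneg_inner_inverse[OF K F(2,3)])
  show "spectral_radius (mat 1 - A ** N) < 1"
    using inner_inverse_cone_kernel[OF K F(1-3) s, folded N_def]
    by (intro spectral_radius_lt_one[OF K A B N]) auto
  then show "invertible N" by (rule invertible_if_spectral_radius_lt_one)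
qed

theorem theorem3p10:
  fixes K :: "(real^'n) set" and A U V F G Fb Gb :: "real^'n^'n" and s :: nat
  assumes K: "proper_cone K"
    and Amon: "K_monotone K A"
    and spl: "K_regular_splitting K A U V"
    and spl1: "K_weak_regular_splitting_II K U F G"
    and spl2: "K_weak_regular_splitting_II K U Fb Gb"
    and comm1: "V ** matrix_inv F ** G = G ** matrix_inv F ** V"
    and comm2: "V ** matrix_inv Fb ** Gb = Gb ** matrix_inv Fb ** V"
    and s: "s \<ge> 1"
  defines "T \<equiv> matpow (matrix_inv F ** G) s
      + (\<Sum>j<s. matpow (matrix_inv F ** G) j ** matrix_inv F ** V)"
    and "Tb \<equiv> matpow (matrix_inv Fb ** Gb) s
      + (\<Sum>j<s. matpow (matrix_inv Fb ** Gb) j ** matrix_inv Fb ** V)"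
    and "Th \<equiv> matpow (G ** matrix_inv F) s
      + (\<Sum>j<s. matpow (G ** matrix_inv F) j ** V ** matrix_inv F)"
    and "Thb \<equiv> matpow (Gb ** matrix_inv Fb) s
      + (\<Sum>j<s. matpow (Gb ** matrix_inv Fb) j ** V ** matrix_inv Fb)"
    and "P \<equiv> matrix_inv (\<Sum>j<s. matpow (matrix_inv F ** G) j ** matrix_inv F)"
    and "Pb \<equiv> matrix_inv (\<Sum>j<s. matpow (matrix_inv Fb ** Gb) j ** matrix_inv Fb)"
  assumes cond: "(K_geq K (Gb ** matrix_inv Fb) (G ** matrix_inv F) \<and> K_nonneg K (Th ** P))
              \<or> K_geq K (Thb ** Pb) (Th ** P)"
  shows "spectral_radius T \<le> spectral_radius Tb \<and> spectral_radius Tb < 1"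
proof -
  define N Nb where "N = inner_inverse F G s" and "Nb = inner_inverse Fb Gb s"
  note it = weak_regular_II_inner_iteration[OF K Amon spl spl1 comm1 s, folded N_def]
  note itb = weak_regular_II_inner_iteration[OF K Amon spl spl2 comm2 s, folded Nb_def]
  have T: "T = mat 1 - N ** A" "Th = mat 1 - A ** N" "P = matrix_inv N"
    and Tb: "Tb = mat 1 - Nb ** A" "Thb = mat 1 - A ** Nb" "Pb = matrix_inv Nb"
    using it(1,2) itb(1,2)
    by (simp_all add: T_def Th_def P_def Tb_def Thb_def Pb_def N_def Nb_def inner_inverse_def)
  have invA: "invertible A" using Amon by (simp add: K_monotone_def)
  have "spectral_radius (mat 1 - N ** A) \<le> spectral_radius (mat 1 - A ** Nb)"
    using cond
  proof
    assume i: "K_geq K (Gb ** matrix_inv Fb) (G ** matrix_inv F) \<and> K_nonneg K (Th ** P)"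
    then have "K_nonneg K (mat 1 - N ** A)"
      using K_nonneg_mult[OF it(6)] by (simp add: T iteration_eq_mult_hat[OF it(5)])
    moreover have "K_geq K N Nb"
      unfolding N_def Nb_def using i spl spl1 spl2
      by (intro K_geq_inner_inverse[OF K]) (auto simp: K_regular_splitting_def)
    ultimately show ?thesis using spectral_radius_comparison_inverse_geq[OF K Amon _ itb(3)] by blast
  next
    assume "K_geq K (Thb ** Pb) (Th ** P)"
    then have "K_geq K (matrix_inv Nb) (matrix_inv N)"
      by (simp add: T Tb hat_iteration_mult_inverse it(5) itb(5) K_geq_def)
    then show ?thesis
      using spectral_radius_comparison_inverse_leq[OF K Amon it(5) itb(5) it(3) itb(3) it(4)]
      by (simp add: spectral_radius_mult_commute[OF invA])
  qed
  then show ?thesis using itb(4) by (simp add: T Tb spectral_radius_mult_commute[OF invA])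
qed

end
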